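(* Let $\mathcal{H}_C$ be a finite-dimensional complex Hilbert space, let $\Pi_1,\dots,\Pi_m$ be mutually orthogonal orthogonal projections on $\mathcal{H}_C$ with $\sum_j\Pi_j=I$, and for each $k\in\mathbb{R}$ let $U_k$ be a unitary operator on $\mathcal{H}_C$. For $0\le p\le1$, $q=1-p$, define the linear map on $L(\mathcal{H}_C)$ $$\mathcal{L}_{k,k',p}(\rho)=qU_k\rho U_{k'}^*+p\sum_{j=1}^m\Pi_jU_k\rho(\Pi_jU_{k'})^*.$$ Say that a linear map satisfies the eigenvalue condition if $1$ is an eigenvalue of it of algebraic multiplicity $1$ and all its other eigenvalues have absolute value strictly less than $1$. If $\mathcal{L}_{k,k,1}$ satisfies the eigenvalue condition, then $\mathcal{L}_{k,k,p}$ satisfies the eigenvalue condition for every $0<p\le1$.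
   Context: $L(\mathcal{H}_C)$ denotes the space of linear operators on $\mathcal{H}_C$ (with the Hilbert–Schmidt inner product). The case $p=0$ corresponds to the coherent (unitary) quantum random walk and $p=1$ to the fully decoherent (open) quantum random walk. *)

theory Defs
  imports "Jordan_Normal_Form.Jordan_Normal_Form" "HOL-Computational_Algebra.Polynomial"
begin

definition adj :: "complex mat \<Rightarrow> complex mat" where
  "adj A = mat (dim_col A) (dim_row A) (\<lambda>(i,j). cnj (A $$ (j,i)))"

definition unitary_op :: "nat \<Rightarrow> complex mat \<Rightarrow> bool" where
  "unitary_op n U \<longleftrightarrow> U \<in> carrier_mat n n \<and> U * adj U = 1\<^sub>m n \<and> adj U * U = 1\<^sub>m n"

fun msum :: "nat \<Rightarrow> (nat \<Rightarrow> complex mat) \<Rightarrow> nat \<Rightarrow> complex mat" where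
  "msum n f 0 = 0\<^sub>m n n"
| "msum n f (Suc m) = msum n f m + f m"

definition proj_resolution :: "nat \<Rightarrow> nat \<Rightarrow> (nat \<Rightarrow> complex mat) \<Rightarrow> bool" where
  "proj_resolution n m P \<longleftrightarrow>
     (\<forall>j<m. P j \<in> carrier_mat n n \<and> adj (P j) = P j \<and> P j * P j = P j) \<and>
     (\<forall>i<m. \<forall>j<m. i \<noteq> j \<longrightarrow> P i * P j = 0\<^sub>m n n) \<and>
     msum n P m = 1\<^sub>m n"

definition Lmap :: "nat \<Rightarrow> nat \<Rightarrow> (nat \<Rightarrow> complex mat) \<Rightarrow> (real \<Rightarrow> complex mat)
                    \<Rightarrow> real \<Rightarrow> real \<Rightarrow> real \<Rightarrow> complex mat \<Rightarrow> complex mat" where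
  "Lmap n m P U k k' p \<rho> =
     complex_of_real (1 - p) \<cdot>\<^sub>m (U k * \<rho> * adj (U k')) +
     complex_of_real p \<cdot>\<^sub>m msum n (\<lambda>j. P j * U k * \<rho> * adj (P j * U k')) m"

definition mat_unit :: "nat \<Rightarrow> nat \<Rightarrow> nat \<Rightarrow> complex mat" where
  "mat_unit n a b = mat n n (\<lambda>(i,j). if i = a \<and> j = b then 1 else 0)"

(* matrix of a linear map f on L(C^n) w.r.t. the basis of matrix units,
   with E_{ab} numbered a*n+b *)
definition op_matrix :: "nat \<Rightarrow> (complex mat \<Rightarrow> complex mat) \<Rightarrow> complex mat" where
  "op_matrix n f = mat (n*n) (n*n)
     (\<lambda>(r,c). f (mat_unit n (c div n) (c mod n)) $$ (r div n, r mod n))"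

definition eigenvalue_condition :: "complex mat \<Rightarrow> bool" where
  "eigenvalue_condition M \<longleftrightarrow>
     eigenvalue M 1 \<and> order 1 (char_poly M) = 1 \<and>
     (\<forall>e. eigenvalue M e \<and> e \<noteq> 1 \<longrightarrow> cmod e < 1)"

end

theory Submission
  imports Defs "Jordan_Normal_Form.Jordan_Normal_Form_Uniqueness"
    "Jordan_Normal_Form.Jordan_Normal_Form_Existence"
begin

text \<open>Write \<open>L\<^sub>p\<close> for \<open>\<L>\<^sub>k\<^sub>,\<^sub>k\<^sub>,\<^sub>p\<close> and \<open>\<Delta>\<close> for the pinching \<open>Y \<mapsto> \<Sum>\<^sub>j \<Pi>\<^sub>j Y \<Pi>\<^sub>j\<close>. With
  \<open>Y = U\<^sub>k \<rho> U\<^sub>k\<^sup>*\<close> we have \<open>L\<^sub>p \<rho> = \<Delta> Y + q (Y - \<Delta> Y)\<close>, and \<open>\<Delta>\<close> is an orthogonal projection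
  for the Hilbert-Schmidt inner product. Hence \<open>\<parallel>L\<^sub>p \<rho>\<parallel>\<^sup>2 = \<parallel>\<Delta> Y\<parallel>\<^sup>2 + q\<^sup>2 \<parallel>Y - \<Delta> Y\<parallel>\<^sup>2 \<le> \<parallel>\<rho>\<parallel>\<^sup>2\<close>:
  \<open>L\<^sub>p\<close> is a contraction, and for \<open>p > 0\<close> equality forces \<open>Y = \<Delta> Y\<close>, i.e. \<open>L\<^sub>p \<rho> = L\<^sub>1 \<rho>\<close>.
  So every eigenvector of \<open>L\<^sub>p\<close> for a unimodular eigenvalue is one of \<open>L\<^sub>1\<close>, and \<open>L\<^sub>p\<close> and
  \<open>L\<^sub>1\<close> have the same fixed points. A contraction has no Jordan block of size \<open>\<ge> 2\<close> for
  the eigenvalue 1, so the algebraic multiplicity of 1 for \<open>L\<^sub>p\<close> equals the dimension of its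
  fixed space, which is that of \<open>L\<^sub>1\<close>, namely 1.\<close>

section \<open>Multiplicities via Jordan normal forms\<close>

lemma sum_list_min_1_eq_1: "sum_list (ns :: nat list) = 1 \<Longrightarrow> sum_list (map (min 1) ns) = 1"
proof (induction ns)
  case (Cons a ns)
  then show ?case
    by (cases a) (auto simp: sum_list_eq_0_iff)
qed simp

lemma sum_list_eq_if_min_2_eq_min_1:
  "sum_list (map (min 2) (ns :: nat list)) = sum_list (map (min 1) ns) \<Longrightarrow>
   sum_list ns = sum_list (map (min 1) ns)"
proof (induction ns)
  case (Cons a ns)
  have "sum_list (map (min 1) ns) \<le> sum_list (map (min 2) ns)"
    by (induction ns) auto
  then have "min 2 a = min 1 a" "sum_list (map (min 2) ns) = sum_list (map (min 1) ns)"
    using Cons.prems by auto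
  with Cons.IH show ?case by auto
qed simp

lemma jordan_nf_exists_complex:
  fixes A :: "complex mat"
  assumes "A \<in> carrier_mat K K"
  obtains n_as where "jordan_nf A n_as"
  using char_poly_factorized[OF assms] jordan_nf_exists[OF assms] by blast

lemma jordan_blocks_filter_eq: "[(n, e)\<leftarrow>n_as . e = ev] = filter (\<lambda>na. snd na = ev) n_as"
  by (induction n_as) auto

lemma dim_eigenspace_eq_1_if_order_1:
  fixes A :: "complex mat"
  assumes "A \<in> carrier_mat K K" and "Polynomial.order e (char_poly A) = 1"
  shows "dim_gen_eigenspace A e 1 = 1"
proof -
  obtain n_as where jnf: "jordan_nf A n_as"
    using jordan_nf_exists_complex[OF assms(1)] .
  define ns where "ns = map fst (filter (\<lambda>na. snd na = e) n_as)"
  have "sum_list ns = 1" using jordan_nf_order[OF jnf, of e] assms(2) ns_def by simp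
  moreover have "dim_gen_eigenspace A e 1 = sum_list (map (min 1) ns)"
    using dim_gen_eigenspace[OF jnf, of e 1] unfolding jordan_blocks_filter_eq ns_def by simp
  ultimately show ?thesis using sum_list_min_1_eq_1 by simp
qed

text \<open>The hypothesis says that all Jordan blocks for \<open>e\<close> have size 1.\<close>

lemma order_char_poly_eq_dim_eigenspace:
  fixes A :: "complex mat"
  assumes "A \<in> carrier_mat K K" and "dim_gen_eigenspace A e 2 = dim_gen_eigenspace A e 1"
  shows "Polynomial.order e (char_poly A) = dim_gen_eigenspace A e 1"
proof -
  obtain n_as where jnf: "jordan_nf A n_as"
    using jordan_nf_exists_complex[OF assms(1)] .
  define ns where "ns = map fst (filter (\<lambda>na. snd na = e) n_as)"
  have dim1: "dim_gen_eigenspace A e 1 = sum_list (map (min 1) ns)"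
    using dim_gen_eigenspace[OF jnf, of e 1] unfolding jordan_blocks_filter_eq ns_def by simp
  have dim2: "dim_gen_eigenspace A e 2 = sum_list (map (min 2) ns)"
    using dim_gen_eigenspace[OF jnf, of e 2] unfolding jordan_blocks_filter_eq ns_def by simp
  have "sum_list ns = sum_list (map (min 1) ns)"
    using sum_list_eq_if_min_2_eq_min_1[of ns] assms(2) dim1 dim2 by simp
  then show ?thesis using jordan_nf_order[OF jnf, of e] dim1 ns_def by simp
qed

lemma char_matrix_mult_vec:
  assumes "(A :: complex mat) \<in> carrier_mat K K" and "v \<in> carrier_vec K"
  shows "char_matrix A e *\<^sub>v v = A *\<^sub>v v + (- e) \<cdot>\<^sub>v v"
  unfolding char_matrix_def
  by (rule eq_vecI, insert assms, auto simp: add_scalar_prod_distrib[of _ K])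

lemma char_matrix_1_mult_vec_eq_0_iff:
  assumes A: "(A :: complex mat) \<in> carrier_mat K K" and v: "v \<in> carrier_vec K"
  shows "char_matrix A 1 *\<^sub>v v = 0\<^sub>v K \<longleftrightarrow> A *\<^sub>v v = v"
  unfolding char_matrix_mult_vec[OF A v] vec_eq_iff using A v by auto

lemma dim_gen_eigenspace_2_eq_1_if_no_chain:
  fixes A :: "complex mat"
  assumes A: "A \<in> carrier_mat K K"
    and no_chain: "\<And>v. v \<in> carrier_vec K \<Longrightarrow> char_matrix A e *\<^sub>v (char_matrix A e *\<^sub>v v) = 0\<^sub>v K \<Longrightarrow>
      char_matrix A e *\<^sub>v v = 0\<^sub>v K"
  shows "dim_gen_eigenspace A e 2 = dim_gen_eigenspace A e 1"
proof -
  define C where "C = char_matrix A e"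
  have C: "C \<in> carrier_mat K K" using A C_def by simp
  have CC: "C * C \<in> carrier_mat K K" using C by simp
  have "mat_kernel (C ^\<^sub>m 2) = mat_kernel C"
  proof -
    have "(C * C) *\<^sub>v v = 0\<^sub>v K \<longleftrightarrow> C *\<^sub>v v = 0\<^sub>v K" if "v \<in> carrier_vec K" for v
      using C that no_chain[OF that] unfolding C_def[symmetric] by (auto simp: assoc_mult_mat_vec)
    moreover have "C ^\<^sub>m 2 = C * C" using C by (simp add: numeral_2_eq_2)
    ultimately show ?thesis unfolding mat_kernel[OF C] by (simp add: mat_kernel[OF CC]) blast
  qed
  then show ?thesis unfolding dim_gen_eigenspace_def kernel_dim_def C_def by simp
qed

section \<open>Contractions\<close>

definition vec_norm_sq :: "nat \<Rightarrow> complex vec \<Rightarrow> real" where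
  "vec_norm_sq K v = (\<Sum>i<K. (cmod (v $ i))\<^sup>2)"

definition contraction :: "nat \<Rightarrow> complex mat \<Rightarrow> bool" where
  "contraction K M \<longleftrightarrow> M \<in> carrier_mat K K \<and>
     (\<forall>v \<in> carrier_vec K. vec_norm_sq K (M *\<^sub>v v) \<le> vec_norm_sq K v)"

lemma vec_norm_sq_nonneg: "vec_norm_sq K v \<ge> 0"
  unfolding vec_norm_sq_def by (simp add: sum_nonneg)

lemma vec_norm_sq_eq_0_iff:
  assumes "v \<in> carrier_vec K"
  shows "vec_norm_sq K v = 0 \<longleftrightarrow> v = 0\<^sub>v K"
proof
  assume "vec_norm_sq K v = 0"
  then have "\<forall>i\<in>{..<K}. (cmod (v $ i))\<^sup>2 = 0"
    unfolding vec_norm_sq_def by (subst sum_nonneg_eq_0_iff[symmetric]) auto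
  then show "v = 0\<^sub>v K" using assms by (intro eq_vecI) auto
qed (simp add: vec_norm_sq_def)

lemma vec_norm_sq_smult:
  "v \<in> carrier_vec K \<Longrightarrow> vec_norm_sq K (c \<cdot>\<^sub>v v) = (cmod c)\<^sup>2 * vec_norm_sq K v"
  unfolding vec_norm_sq_def by (simp add: norm_mult power_mult_distrib sum_distrib_left)

lemma vec_norm_sq_add_smult:
  assumes "v \<in> carrier_vec K" "w \<in> carrier_vec K"
  shows "vec_norm_sq K (v + complex_of_real t \<cdot>\<^sub>v w) =
    vec_norm_sq K v + 2 * t * (\<Sum>i<K. Re (v $ i * cnj (w $ i))) + t\<^sup>2 * vec_norm_sq K w"
proof -
  have "(cmod (a + of_real t * b))\<^sup>2 = (cmod a)\<^sup>2 + 2 * t * Re (a * cnj b) + t\<^sup>2 * (cmod b)\<^sup>2"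
    for a b :: complex
    unfolding cmod_power2 by (simp add: power2_eq_square algebra_simps)
  then have "vec_norm_sq K (v + complex_of_real t \<cdot>\<^sub>v w) =
      (\<Sum>i<K. (cmod (v $ i))\<^sup>2 + 2 * t * Re (v $ i * cnj (w $ i)) + t\<^sup>2 * (cmod (w $ i))\<^sup>2)"
    unfolding vec_norm_sq_def using assms by (intro sum.cong) auto
  then show ?thesis
    by (simp only: sum.distrib vec_norm_sq_def sum_distrib_left)
qed

lemma contraction_eigenvalue_norm_le_1:
  assumes M: "contraction K M" and ev: "eigenvector M v e"
  shows "cmod e \<le> 1"
proof -
  have v: "v \<in> carrier_vec K" "v \<noteq> 0\<^sub>v K" "M *\<^sub>v v = e \<cdot>\<^sub>v v"
    using ev M unfolding eigenvector_def contraction_def by auto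
  have pos: "vec_norm_sq K v > 0"
    using vec_norm_sq_eq_0_iff[OF v(1)] vec_norm_sq_nonneg[of K v] v(2) by linarith
  have "(cmod e)\<^sup>2 * vec_norm_sq K v \<le> vec_norm_sq K v"
    using M v vec_norm_sq_smult[OF v(1), of e] unfolding contraction_def by metis
  then have "(cmod e)\<^sup>2 \<le> 1" using pos by simp
  then show ?thesis by (simp add: power_le_one_iff abs_le_square_iff)
qed

text \<open>Along \<open>v + s w\<close> the contraction acts as the shift \<open>s \<mapsto> s + 1\<close>, so the quadratic
  \<open>s \<mapsto> \<parallel>v + s w\<parallel>\<^sup>2\<close> cannot increase from \<open>s\<close> to \<open>s + 1\<close>; for large \<open>s\<close> this forces
  \<open>\<parallel>w\<parallel> = 0\<close>.\<close>

lemma contraction_no_jordan_chain: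
  assumes M: "contraction K M"
    and v: "v \<in> carrier_vec K" and w: "w \<in> carrier_vec K"
    and Mw: "M *\<^sub>v w = w" and Mv: "M *\<^sub>v v = v + w"
  shows "w = 0\<^sub>v K"
proof -
  have Mc: "M \<in> carrier_mat K K" using M unfolding contraction_def by simp
  define R where "R = (\<Sum>i<K. Re (v $ i * cnj (w $ i)))"
  define N where "N = vec_norm_sq K w"
  have step: "2 * R + (2 * s + 1) * N \<le> 0" for s :: real
  proof -
    have "M *\<^sub>v (v + complex_of_real s \<cdot>\<^sub>v w) = M *\<^sub>v v + complex_of_real s \<cdot>\<^sub>v (M *\<^sub>v w)"
      using Mc v w by (simp add: mult_add_distrib_mat_vec mult_mat_vec)
    also have "\<dots> = v + complex_of_real (s + 1) \<cdot>\<^sub>v w"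
      using Mv Mw v w by (intro eq_vecI) (auto simp: algebra_simps)
    finally have "vec_norm_sq K (v + complex_of_real (s + 1) \<cdot>\<^sub>v w)
        \<le> vec_norm_sq K (v + complex_of_real s \<cdot>\<^sub>v w)"
      using M v w unfolding contraction_def by (metis add_carrier_vec smult_carrier_vec)
    then have "2 * (s + 1) * R + (s + 1)\<^sup>2 * N \<le> 2 * s * R + s\<^sup>2 * N"
      unfolding vec_norm_sq_add_smult[OF v w] R_def N_def by simp
    then show ?thesis by (simp add: power2_eq_square algebra_simps)
  qed
  have "N = 0"
  proof (rule ccontr)
    assume "N \<noteq> 0"
    then have "N > 0" using vec_norm_sq_nonneg[of K w] N_def by simp
    define s where "s = (\<bar>R\<bar> + 1) / N"
    have "(2 * s + 1) * N = 2 * (\<bar>R\<bar> + 1) + N"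
      using \<open>N > 0\<close> unfolding s_def by (simp add: field_simps)
    then have "2 * R + 2 * (\<bar>R\<bar> + 1) + N \<le> 0"
      using step[of s] by simp
    with \<open>N > 0\<close> show False by (cases "R \<ge> 0") auto
  qed
  then show ?thesis using vec_norm_sq_eq_0_iff[OF w] N_def by simp
qed

lemma contraction_dim_gen_eigenspace_2_eq_1:
  assumes M: "contraction K M"
  shows "dim_gen_eigenspace M 1 2 = dim_gen_eigenspace M 1 1"
proof -
  have Mc: "M \<in> carrier_mat K K" using M unfolding contraction_def by simp
  show ?thesis
  proof (rule dim_gen_eigenspace_2_eq_1_if_no_chain[OF Mc])
    fix v assume v: "v \<in> carrier_vec K"
      and chain: "char_matrix M 1 *\<^sub>v (char_matrix M 1 *\<^sub>v v) = 0\<^sub>v K"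
    define w where "w = char_matrix M 1 *\<^sub>v v"
    have w: "w \<in> carrier_vec K"
      unfolding w_def using mult_mat_vec_carrier[OF char_matrix_closed[OF Mc] v] .
    have "M *\<^sub>v w = w"
      using char_matrix_1_mult_vec_eq_0_iff[OF Mc w] chain w_def by simp
    moreover have "M *\<^sub>v v = v + w"
      unfolding w_def char_matrix_mult_vec[OF Mc v] by (rule eq_vecI) (use Mc v in auto)
    ultimately show "char_matrix M 1 *\<^sub>v v = 0\<^sub>v K"
      using contraction_no_jordan_chain[OF M v w] w_def by simp
  qed
qed

lemma contraction_order_1_char_poly:
  assumes M: "contraction K M" and N: "N \<in> carrier_mat K K"
    and same_fixed: "\<And>v. v \<in> carrier_vec K \<Longrightarrow> M *\<^sub>v v = v \<longleftrightarrow> N *\<^sub>v v = v"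
    and order_N: "Polynomial.order 1 (char_poly N) = 1"
  shows "Polynomial.order 1 (char_poly M) = 1"
proof -
  have Mc: "M \<in> carrier_mat K K" using M unfolding contraction_def by simp
  have "mat_kernel (char_matrix M 1) = mat_kernel (char_matrix N 1)"
    using mat_kernel[OF char_matrix_closed[OF Mc]] mat_kernel[OF char_matrix_closed[OF N]]
      char_matrix_1_mult_vec_eq_0_iff[OF Mc] char_matrix_1_mult_vec_eq_0_iff[OF N] same_fixed
    by auto
  then have "dim_gen_eigenspace M 1 1 = dim_gen_eigenspace N 1 1"
    unfolding dim_gen_eigenspace_def kernel_dim_def
    using carrier_matD(2)[OF char_matrix_closed[OF Mc]] carrier_matD(2)[OF char_matrix_closed[OF N]]
    by simp
  also have "\<dots> = 1" by (rule dim_eigenspace_eq_1_if_order_1[OF N order_N])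
  finally show ?thesis
    using order_char_poly_eq_dim_eigenspace[OF Mc contraction_dim_gen_eigenspace_2_eq_1[OF M]]
    by simp
qed

lemma eigenvalue_condition_of_contraction:
  assumes M: "contraction K M" and N: "N \<in> carrier_mat K K"
    and cond: "eigenvalue_condition N"
    and isometric: "\<And>v. v \<in> carrier_vec K \<Longrightarrow> vec_norm_sq K (M *\<^sub>v v) = vec_norm_sq K v \<Longrightarrow>
      M *\<^sub>v v = N *\<^sub>v v"
    and fixed: "\<And>v. v \<in> carrier_vec K \<Longrightarrow> N *\<^sub>v v = v \<Longrightarrow> M *\<^sub>v v = v"
  shows "eigenvalue_condition M"
proof -
  have Mc: "M \<in> carrier_mat K K" using M unfolding contraction_def by simp
  have N1: "eigenvalue N 1" "Polynomial.order 1 (char_poly N) = 1"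
    and N_others: "\<And>e. eigenvalue N e \<Longrightarrow> e \<noteq> 1 \<Longrightarrow> cmod e < 1"
    using cond unfolding eigenvalue_condition_def by auto
  have same_fixed: "M *\<^sub>v v = v \<longleftrightarrow> N *\<^sub>v v = v" if "v \<in> carrier_vec K" for v
    using isometric[OF that] fixed[OF that] by auto
  have "eigenvalue M 1"
  proof -
    obtain v where "eigenvector N v 1" using N1(1) unfolding eigenvalue_def by blast
    then have "v \<in> carrier_vec K" "v \<noteq> 0\<^sub>v K" "N *\<^sub>v v = v"
      using N unfolding eigenvector_def by auto
    then show ?thesis
      using same_fixed Mc unfolding eigenvalue_def eigenvector_def by auto
  qed
  moreover have "cmod e < 1" if ev: "eigenvalue M e" and e1: "e \<noteq> 1" for e
  proof (rule ccontr)
    assume not_lt: "\<not> cmod e < 1"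
    obtain v where v_ev: "eigenvector M v e" using ev unfolding eigenvalue_def by blast
    then have v: "v \<in> carrier_vec K" "v \<noteq> 0\<^sub>v K" "M *\<^sub>v v = e \<cdot>\<^sub>v v"
      using Mc unfolding eigenvector_def by auto
    have e_norm: "cmod e = 1"
      using contraction_eigenvalue_norm_le_1[OF M v_ev] not_lt by simp
    then have "vec_norm_sq K (M *\<^sub>v v) = vec_norm_sq K v"
      unfolding v(3) vec_norm_sq_smult[OF v(1)] by simp
    then have "N *\<^sub>v v = e \<cdot>\<^sub>v v" using isometric[OF v(1)] v(3) by simp
    then have "eigenvalue N e"
      using v N unfolding eigenvalue_def eigenvector_def by auto
    then show False using N_others e1 e_norm by force
  qed
  ultimately show ?thesis
    unfolding eigenvalue_condition_def
    using contraction_order_1_char_poly[OF M N same_fixed N1(2)] by blast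
qed

section \<open>Hilbert-Schmidt geometry of \<open>n \<times> n\<close> matrices\<close>

lemma adj_carrier [simp]: "A \<in> carrier_mat n n \<Longrightarrow> adj A \<in> carrier_mat n n"
  unfolding adj_def by auto

lemma adj_dims [simp]: "dim_row (adj A) = dim_col A" "dim_col (adj A) = dim_row A"
  unfolding adj_def by auto

lemma adj_index [simp]: "i < dim_col A \<Longrightarrow> j < dim_row A \<Longrightarrow> adj A $$ (i, j) = cnj (A $$ (j, i))"
  unfolding adj_def by auto

lemma adj_adj [simp]: "adj (adj A) = A"
  by (rule eq_matI) (auto simp: adj_def)

lemma adj_mult:
  assumes "A \<in> carrier_mat n n" "B \<in> carrier_mat n n"
  shows "adj (A * B) = adj B * adj A"
  using assms unfolding adj_def
  by (intro eq_matI) (auto simp: scalar_prod_def atLeast0LessThan mult.commute)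

lemma msum_carrier [simp]:
  "(\<And>l. l < m \<Longrightarrow> f l \<in> carrier_mat n n) \<Longrightarrow> msum n f m \<in> carrier_mat n n"
  by (induction m) auto

lemma msum_index:
  "(\<And>l. l < m \<Longrightarrow> f l \<in> carrier_mat n n) \<Longrightarrow> i < n \<Longrightarrow> j < n \<Longrightarrow>
   msum n f m $$ (i, j) = (\<Sum>l<m. f l $$ (i, j))"
proof (induction m)
  case (Suc m)
  have "f m \<in> carrier_mat n n" using Suc.prems by simp
  then have "(msum n f m + f m) $$ (i, j) = msum n f m $$ (i, j) + f m $$ (i, j)"
    using Suc.prems(2,3) by simp
  with Suc show ?case by simp
qed auto

lemma msum_cong: "(\<And>l. l < m \<Longrightarrow> f l = g l) \<Longrightarrow> msum n f m = msum n g m"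
  by (induction m) auto

lemma mult_msum_distrib:
  assumes "A \<in> carrier_mat n n" "\<And>l. l < m \<Longrightarrow> f l \<in> carrier_mat n n"
  shows "A * msum n f m = msum n (\<lambda>l. A * f l) m"
  using assms
proof (induction m)
  case (Suc m)
  then have "A * (msum n f m + f m) = A * msum n f m + A * f m"
    by (intro mult_add_distrib_mat) auto
  with Suc show ?case by auto
qed auto

lemma msum_mult_distrib:
  assumes "A \<in> carrier_mat n n" "\<And>l. l < m \<Longrightarrow> f l \<in> carrier_mat n n"
  shows "msum n f m * A = msum n (\<lambda>l. f l * A) m"
  using assms
proof (induction m)
  case (Suc m)
  have "msum n f m \<in> carrier_mat n n" using Suc.prems by auto
  then have "(msum n f m + f m) * A = msum n f m * A + f m * A"
    by (rule add_mult_distrib_mat) (use Suc.prems in auto)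
  with Suc show ?case by auto
qed auto

lemma msum_zero: "(\<And>l. l < m \<Longrightarrow> f l = 0\<^sub>m n n) \<Longrightarrow> msum n f m = 0\<^sub>m n n"
  by (induction m) auto

lemma msum_single:
  assumes "j < m" "\<And>l. l < m \<Longrightarrow> l \<noteq> j \<Longrightarrow> f l = 0\<^sub>m n n" "f j \<in> carrier_mat n n"
  shows "msum n f m = f j"
  using assms
proof (induction m)
  case (Suc m)
  show ?case
  proof (cases "j = m")
    case True
    then have "msum n f m = 0\<^sub>m n n"
      using Suc.prems by (intro msum_zero) auto
    with True Suc.prems show ?thesis by auto
  next
    case False
    with Suc show ?thesis by auto
  qed
qed simp

definition hs_inner :: "nat \<Rightarrow> complex mat \<Rightarrow> complex mat \<Rightarrow> complex" where
  "hs_inner n X Y = (\<Sum>i<n. \<Sum>j<n. X $$ (i, j) * cnj (Y $$ (i, j)))"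

definition hs_norm_sq :: "nat \<Rightarrow> complex mat \<Rightarrow> real" where
  "hs_norm_sq n X = (\<Sum>i<n. \<Sum>j<n. (cmod (X $$ (i, j)))\<^sup>2)"

lemma hs_inner_self: "hs_inner n X X = complex_of_real (hs_norm_sq n X)"
  unfolding hs_inner_def hs_norm_sq_def by (simp only: of_real_sum complex_norm_square)

lemma hs_norm_sq_nonneg: "hs_norm_sq n X \<ge> 0"
  unfolding hs_norm_sq_def by (intro sum_nonneg) auto

lemma hs_norm_sq_eq_0_iff:
  assumes "X \<in> carrier_mat n n"
  shows "hs_norm_sq n X = 0 \<longleftrightarrow> X = 0\<^sub>m n n"
proof
  assume "hs_norm_sq n X = 0"
  then have "\<forall>i\<in>{..<n}. (\<Sum>j<n. (cmod (X $$ (i, j)))\<^sup>2) = 0"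
    unfolding hs_norm_sq_def by (subst sum_nonneg_eq_0_iff[symmetric]) (auto intro: sum_nonneg)
  then have "\<forall>i\<in>{..<n}. \<forall>j\<in>{..<n}. (cmod (X $$ (i, j)))\<^sup>2 = 0"
    by (subst (asm) sum_nonneg_eq_0_iff) auto
  then show "X = 0\<^sub>m n n" using assms by (intro eq_matI) auto
qed (simp add: hs_norm_sq_def)

lemma hs_inner_mult_left:
  assumes "A \<in> carrier_mat n n" "X \<in> carrier_mat n n" "Y \<in> carrier_mat n n"
  shows "hs_inner n (A * X) Y = hs_inner n X (adj A * Y)"
proof -
  have "hs_inner n (A * X) Y = (\<Sum>i<n. \<Sum>j<n. \<Sum>a<n. A $$ (i, a) * X $$ (a, j) * cnj (Y $$ (i, j)))"
    unfolding hs_inner_def using assms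
    by (simp add: scalar_prod_def row_def col_def atLeast0LessThan sum_distrib_right)
  also have "\<dots> = (\<Sum>i<n. \<Sum>a<n. \<Sum>j<n. A $$ (i, a) * X $$ (a, j) * cnj (Y $$ (i, j)))"
    by (intro sum.cong refl sum.swap)
  also have "\<dots> = (\<Sum>a<n. \<Sum>j<n. \<Sum>i<n. A $$ (i, a) * X $$ (a, j) * cnj (Y $$ (i, j)))"
    by (subst sum.swap) (intro sum.cong refl sum.swap)
  also have "\<dots> = hs_inner n X (adj A * Y)"
    unfolding hs_inner_def using assms
    by (simp add: scalar_prod_def row_def col_def atLeast0LessThan sum_distrib_left mult.commute mult.left_commute)
  finally show ?thesis .
qed

lemma hs_inner_mult_right:
  assumes "B \<in> carrier_mat n n" "X \<in> carrier_mat n n" "Y \<in> carrier_mat n n"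
  shows "hs_inner n (X * B) Y = hs_inner n X (Y * adj B)"
proof -
  have "hs_inner n (X * B) Y = (\<Sum>i<n. \<Sum>j<n. \<Sum>a<n. X $$ (i, a) * B $$ (a, j) * cnj (Y $$ (i, j)))"
    unfolding hs_inner_def using assms
    by (simp add: scalar_prod_def row_def col_def atLeast0LessThan sum_distrib_right)
  also have "\<dots> = (\<Sum>i<n. \<Sum>a<n. \<Sum>j<n. X $$ (i, a) * B $$ (a, j) * cnj (Y $$ (i, j)))"
    by (intro sum.cong refl sum.swap)
  also have "\<dots> = hs_inner n X (Y * adj B)"
    unfolding hs_inner_def using assms
    by (simp add: scalar_prod_def row_def col_def atLeast0LessThan sum_distrib_left mult.commute mult.left_commute)
  finally show ?thesis .
qed

lemma hs_inner_add_left: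
  "A \<in> carrier_mat n n \<Longrightarrow> B \<in> carrier_mat n n \<Longrightarrow> hs_inner n (A + B) Z = hs_inner n A Z + hs_inner n B Z"
  unfolding hs_inner_def by (simp add: sum.distrib distrib_right)

lemma hs_inner_add_right:
  "A \<in> carrier_mat n n \<Longrightarrow> B \<in> carrier_mat n n \<Longrightarrow> hs_inner n Z (A + B) = hs_inner n Z A + hs_inner n Z B"
  unfolding hs_inner_def by (simp add: sum.distrib distrib_left)

lemma hs_inner_msum_left:
  "(\<And>l. l < m \<Longrightarrow> f l \<in> carrier_mat n n) \<Longrightarrow> hs_inner n (msum n f m) Z = (\<Sum>l<m. hs_inner n (f l) Z)"
proof (induction m)
  case (Suc m)
  then have "msum n f m \<in> carrier_mat n n" "f m \<in> carrier_mat n n" by auto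
  with Suc show ?case by (simp add: hs_inner_add_left)
qed (simp add: hs_inner_def)

lemma hs_inner_msum_right:
  "(\<And>l. l < m \<Longrightarrow> f l \<in> carrier_mat n n) \<Longrightarrow> hs_inner n Z (msum n f m) = (\<Sum>l<m. hs_inner n Z (f l))"
proof (induction m)
  case (Suc m)
  then have "msum n f m \<in> carrier_mat n n" "f m \<in> carrier_mat n n" by auto
  with Suc show ?case by (simp add: hs_inner_add_right)
qed (simp add: hs_inner_def)

lemma hs_norm_sq_add_smult_orthogonal:
  assumes W: "W \<in> carrier_mat n n" and Z: "Z \<in> carrier_mat n n" and orth: "hs_inner n W Z = 0"
  shows "hs_norm_sq n (W + c \<cdot>\<^sub>m Z) = hs_norm_sq n W + (cmod c)\<^sup>2 * hs_norm_sq n Z"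
proof -
  have "(cmod (a + c * b))\<^sup>2 = (cmod a)\<^sup>2 + (cmod c)\<^sup>2 * (cmod b)\<^sup>2 + 2 * Re (cnj c * (a * cnj b))"
    for a b :: complex
    unfolding cmod_power2 by (simp add: power2_eq_square algebra_simps)
  then have "hs_norm_sq n (W + c \<cdot>\<^sub>m Z) = (\<Sum>i<n. \<Sum>j<n. (cmod (W $$ (i, j)))\<^sup>2 +
      (cmod c)\<^sup>2 * (cmod (Z $$ (i, j)))\<^sup>2 + 2 * Re (cnj c * (W $$ (i, j) * cnj (Z $$ (i, j)))))"
    unfolding hs_norm_sq_def using W Z by (intro sum.cong refl) simp
  also have "\<dots> = hs_norm_sq n W + (cmod c)\<^sup>2 * hs_norm_sq n Z + 2 * Re (cnj c * hs_inner n W Z)"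
    unfolding hs_norm_sq_def hs_inner_def by (simp add: sum.distrib sum_distrib_left Re_sum)
  finally show ?thesis using orth by simp
qed

lemma hs_norm_sq_unitary_conj:
  assumes V: "V \<in> carrier_mat n n" and unitary: "adj V * V = 1\<^sub>m n" and X: "X \<in> carrier_mat n n"
  shows "hs_norm_sq n (V * X * adj V) = hs_norm_sq n X"
proof -
  have aV: "adj V \<in> carrier_mat n n" using V by simp
  have "adj V * (V * (X * adj V)) = (adj V * V) * (X * adj V)"
    using aV V X by (simp add: assoc_mult_mat[of _ n n _ n _ n])
  then have cancel_left: "adj V * (V * (X * adj V)) = X * adj V"
    using unitary X aV by simp
  have cancel_right: "X * adj V * V = X"
    using assoc_mult_mat[OF X aV V] unitary X by simp
  have "complex_of_real (hs_norm_sq n (V * X * adj V)) = hs_inner n (V * (X * adj V)) (V * (X * adj V))"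
    unfolding hs_inner_self assoc_mult_mat[OF V X aV] ..
  also have "\<dots> = hs_inner n (X * adj V) (X * adj V)"
    using hs_inner_mult_left[of V n "X * adj V" "V * (X * adj V)"] cancel_left V X aV by simp
  also have "\<dots> = hs_inner n X X"
    using hs_inner_mult_right[of "adj V" n X "X * adj V"] cancel_right X aV by simp
  finally show ?thesis by (simp add: hs_inner_self)
qed

section \<open>The pinching map\<close>

definition pinching :: "nat \<Rightarrow> nat \<Rightarrow> (nat \<Rightarrow> complex mat) \<Rightarrow> complex mat \<Rightarrow> complex mat" where
  "pinching n m P Y = msum n (\<lambda>j. P j * Y * P j) m"

locale projection_resolution =
  fixes n m :: nat and P :: "nat \<Rightarrow> complex mat"
  assumes resolution: "proj_resolution n m P"
begin

lemma P_carrier: "j < m \<Longrightarrow> P j \<in> carrier_mat n n"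
  using resolution unfolding proj_resolution_def by auto

lemma P_adj: "j < m \<Longrightarrow> adj (P j) = P j"
  using resolution unfolding proj_resolution_def by auto

lemma P_idem: "j < m \<Longrightarrow> P j * P j = P j"
  using resolution unfolding proj_resolution_def by auto

lemma P_orthogonal: "i < m \<Longrightarrow> j < m \<Longrightarrow> i \<noteq> j \<Longrightarrow> P i * P j = 0\<^sub>m n n"
  using resolution unfolding proj_resolution_def by auto

lemma compression_carrier: "j < m \<Longrightarrow> Y \<in> carrier_mat n n \<Longrightarrow> P j * Y * P j \<in> carrier_mat n n"
  using P_carrier by (meson mult_carrier_mat)

lemma pinching_carrier: "Y \<in> carrier_mat n n \<Longrightarrow> pinching n m P Y \<in> carrier_mat n n"
  unfolding pinching_def by (intro msum_carrier compression_carrier)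

lemma pinching_self_adjoint:
  assumes Y: "Y \<in> carrier_mat n n" and Z: "Z \<in> carrier_mat n n"
  shows "hs_inner n (pinching n m P Y) Z = hs_inner n Y (pinching n m P Z)"
proof -
  have compression: "hs_inner n (P l * Y * P l) Z = hs_inner n Y (P l * Z * P l)" if l: "l < m" for l
  proof -
    have Pl: "P l \<in> carrier_mat n n" using P_carrier[OF l] .
    have "hs_inner n (P l * Y * P l) Z = hs_inner n (P l * Y) (Z * P l)"
      using hs_inner_mult_right[of "P l" n "P l * Y" Z] Pl Y Z P_adj[OF l] by simp
    also have "\<dots> = hs_inner n Y (P l * (Z * P l))"
      using hs_inner_mult_left[of "P l" n Y "Z * P l"] Pl Y Z P_adj[OF l] by simp
    finally show ?thesis using assoc_mult_mat[OF Pl Z Pl] by simp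
  qed
  have "hs_inner n (pinching n m P Y) Z = (\<Sum>l<m. hs_inner n (P l * Y * P l) Z)"
    unfolding pinching_def using Y compression_carrier by (intro hs_inner_msum_left)
  also have "\<dots> = (\<Sum>l<m. hs_inner n Y (P l * Z * P l))" using compression by simp
  also have "\<dots> = hs_inner n Y (pinching n m P Z)"
    unfolding pinching_def using Z compression_carrier by (intro hs_inner_msum_right[symmetric])
  finally show ?thesis .
qed

lemma compression_pinching:
  assumes j: "j < m" and Y: "Y \<in> carrier_mat n n"
  shows "P j * pinching n m P Y * P j = P j * Y * P j"
proof -
  have Pj: "P j \<in> carrier_mat n n" using P_carrier[OF j] .
  have terms: "\<And>l. l < m \<Longrightarrow> P l * Y * P l \<in> carrier_mat n n" using Y compression_carrier by simp
  have regroup: "P j * (P l * Y * P l) = P j * P l * Y * P l" if l: "l < m" for l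
  proof -
    have Pl: "P l \<in> carrier_mat n n" using P_carrier[OF l] .
    have "P j * (P l * Y * P l) = P j * (P l * Y) * P l"
      using assoc_mult_mat[OF Pj _ Pl, of "P l * Y"] Pl Y by simp
    also have "\<dots> = P j * P l * Y * P l"
      using assoc_mult_mat[OF Pj Pl Y] by simp
    finally show ?thesis .
  qed
  have "P j * pinching n m P Y = msum n (\<lambda>l. P j * (P l * Y * P l)) m"
    unfolding pinching_def by (rule mult_msum_distrib[OF Pj terms])
  then have "P j * pinching n m P Y * P j = msum n (\<lambda>l. P j * (P l * Y * P l) * P j) m"
    using msum_mult_distrib[OF Pj, of m "\<lambda>l. P j * (P l * Y * P l)"] terms Pj by simp
  also have "\<dots> = P j * (P j * Y * P j) * P j"
  proof (rule msum_single[OF j])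
    fix l assume l: "l < m" "l \<noteq> j"
    then have "P j * (P l * Y * P l) * P j = P j * P l * Y * P l * P j"
      using regroup by simp_all
    then show "P j * (P l * Y * P l) * P j = 0\<^sub>m n n"
      using P_orthogonal[OF j l(1)] l(2) P_carrier[OF l(1)] Pj Y by simp
  qed (use Pj Y in \<open>meson mult_carrier_mat\<close>)
  also have "\<dots> = P j * Y * (P j * P j)"
    using regroup[OF j] P_idem[OF j] assoc_mult_mat[of "P j * Y" n n "P j" n "P j" n] Pj Y by simp
  finally show ?thesis using P_idem[OF j] by simp
qed

lemma pinching_idem:
  "Y \<in> carrier_mat n n \<Longrightarrow> pinching n m P (pinching n m P Y) = pinching n m P Y"
  unfolding pinching_def[of n m P "pinching n m P Y"]
  by (rule trans[OF msum_cong pinching_def[symmetric]]) (rule compression_pinching)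

lemma pinching_orthogonal:
  assumes Y: "Y \<in> carrier_mat n n"
  shows "hs_inner n (pinching n m P Y) (Y - pinching n m P Y) = 0"
proof -
  have DY: "pinching n m P Y \<in> carrier_mat n n" using pinching_carrier[OF Y] .
  have "hs_inner n (pinching n m P Y) (pinching n m P Y) = hs_inner n (pinching n m P Y) Y"
    using pinching_self_adjoint[OF DY Y] pinching_idem[OF Y] by simp
  then show ?thesis
    using Y DY unfolding hs_inner_def by (simp add: sum_subtractf right_diff_distrib)
qed

end

section \<open>Matrices of maps on \<open>L(\<complex>\<^sup>n)\<close>\<close>

text \<open>Row-major vectorisation, matching the numbering \<open>a * n + b\<close> of \<open>E\<^sub>a\<^sub>b\<close> in \<open>op_matrix\<close>.\<close>

definition vec_of_mat :: "nat \<Rightarrow> complex mat \<Rightarrow> complex vec" where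
  "vec_of_mat n X = vec (n * n) (\<lambda>r. X $$ (r div n, r mod n))"

definition mat_of_vec :: "nat \<Rightarrow> complex vec \<Rightarrow> complex mat" where
  "mat_of_vec n v = mat n n (\<lambda>(i, j). v $ (i * n + j))"

lemma row_major_index_less: "a < n \<Longrightarrow> b < (n :: nat) \<Longrightarrow> a * n + b < n * n"
proof -
  assume "a < n" "b < n"
  then have "a * n + b < (a + 1) * n" by simp
  also have "\<dots> \<le> n * n" using \<open>a < n\<close> by (intro mult_right_mono) auto
  finally show ?thesis .
qed

lemma row_major_div_less: "c < n * (n :: nat) \<Longrightarrow> c div n < n"
  by (simp add: less_mult_imp_div_less)

lemma row_major_mod_less: "c < n * (n :: nat) \<Longrightarrow> c mod n < n"
  by (cases "n = 0") auto

lemma sum_row_major: "(\<Sum>c<n * (n :: nat). F c) = (\<Sum>a<n. \<Sum>b<n. F (a * n + b))"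
proof -
  have "(\<Sum>c<n * n. F c) = (\<Sum>(a, b)\<in>{..<n} \<times> {..<n}. F (a * n + b))"
    by (rule sum.reindex_bij_witness[where j = "\<lambda>c. (c div n, c mod n)" and i = "\<lambda>(a, b). a * n + b"])
      (auto simp: row_major_index_less row_major_div_less row_major_mod_less)
  then show ?thesis by (simp add: sum.cartesian_product)
qed

lemma vec_of_mat_carrier [simp]: "vec_of_mat n X \<in> carrier_vec (n * n)"
  unfolding vec_of_mat_def by simp

lemma mat_of_vec_carrier [simp]: "mat_of_vec n v \<in> carrier_mat n n"
  unfolding mat_of_vec_def by simp

lemma vec_of_mat_mat_of_vec: "v \<in> carrier_vec (n * n) \<Longrightarrow> vec_of_mat n (mat_of_vec n v) = v"
  unfolding vec_of_mat_def mat_of_vec_def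
  by (intro eq_vecI) (auto simp: row_major_div_less row_major_mod_less)

lemma mat_of_vec_vec_of_mat: "X \<in> carrier_mat n n \<Longrightarrow> mat_of_vec n (vec_of_mat n X) = X"
  unfolding vec_of_mat_def mat_of_vec_def by (intro eq_matI) (auto simp: row_major_index_less)

lemma vec_norm_sq_vec_of_mat: "vec_norm_sq (n * n) (vec_of_mat n X) = hs_norm_sq n X"
  unfolding vec_norm_sq_def hs_norm_sq_def vec_of_mat_def
  by (simp add: sum_row_major row_major_index_less)

lemma vec_norm_sq_eq_hs_norm_sq:
  "v \<in> carrier_vec (n * n) \<Longrightarrow> vec_norm_sq (n * n) v = hs_norm_sq n (mat_of_vec n v)"
  using vec_norm_sq_vec_of_mat[of n "mat_of_vec n v"] by (simp add: vec_of_mat_mat_of_vec)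

lemma sum_mat_unit_kernel:
  assumes "a < n" "b < n"
  shows "(\<Sum>a'<n. \<Sum>b'<n. mat_unit n a b $$ (a', b') * g a' b') = g a b"
proof -
  have "mat_unit n a b $$ (a', b') * g a' b' = (if a' = a \<and> b' = b then g a' b' else 0)"
    if "a' < n" "b' < n" for a' b'
    using that unfolding mat_unit_def by simp
  then have "(\<Sum>b'<n. mat_unit n a b $$ (a', b') * g a' b') = (if a' = a then g a' b else 0)"
    if "a' < n" for a'
    using assms that by (cases "a' = a") (simp_all add: sum.delta)
  then show ?thesis using assms by simp
qed

lemma op_matrix_mult_vec:
  assumes f: "\<And>X i j. X \<in> carrier_mat n n \<Longrightarrow> i < n \<Longrightarrow> j < n \<Longrightarrow>
      f X $$ (i, j) = (\<Sum>a<n. \<Sum>b<n. X $$ (a, b) * g i j a b)"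
    and v: "v \<in> carrier_vec (n * n)"
  shows "op_matrix n f *\<^sub>v v = vec_of_mat n (f (mat_of_vec n v))"
proof (rule eq_vecI)
  fix r assume "r < dim_vec (vec_of_mat n (f (mat_of_vec n v)))"
  then have r: "r < n * n" unfolding vec_of_mat_def by simp
  define i j where "i = r div n" and "j = r mod n"
  have ij: "i < n" "j < n" using r row_major_div_less row_major_mod_less i_def j_def by auto
  have unit: "f (mat_unit n a b) $$ (i, j) = g i j a b" if "a < n" "b < n" for a b
  proof -
    have "mat_unit n a b \<in> carrier_mat n n" unfolding mat_unit_def by simp
    then show ?thesis using f ij sum_mat_unit_kernel[OF that] by simp
  qed
  have "(op_matrix n f *\<^sub>v v) $ r = (\<Sum>c<n * n. f (mat_unit n (c div n) (c mod n)) $$ (i, j) * v $ c)"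
    using r v unfolding op_matrix_def i_def j_def
    by (simp add: scalar_prod_def row_def atLeast0LessThan mult.commute)
  also have "\<dots> = (\<Sum>a<n. \<Sum>b<n. f (mat_unit n a b) $$ (i, j) * v $ (a * n + b))"
    by (simp add: sum_row_major)
  also have "\<dots> = (\<Sum>a<n. \<Sum>b<n. v $ (a * n + b) * g i j a b)"
    by (intro sum.cong refl) (simp add: unit mult.commute)
  also have "\<dots> = f (mat_of_vec n v) $$ (i, j)"
    using f[of "mat_of_vec n v" i j] ij unfolding mat_of_vec_def by simp
  finally show "(op_matrix n f *\<^sub>v v) $ r = vec_of_mat n (f (mat_of_vec n v)) $ r"
    unfolding vec_of_mat_def i_def j_def using r by simp
qed (simp add: op_matrix_def vec_of_mat_def)

lemma mult_mult_adj_index: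
  assumes A: "A \<in> carrier_mat n n" and X: "X \<in> carrier_mat n n" and B: "B \<in> carrier_mat n n"
    and ij: "i < n" "j < n"
  shows "(A * X * adj B) $$ (i, j) = (\<Sum>a<n. \<Sum>b<n. X $$ (a, b) * (A $$ (i, a) * cnj (B $$ (j, b))))"
proof -
  have "(A * X * adj B) $$ (i, j) = (\<Sum>b<n. (\<Sum>a<n. A $$ (i, a) * X $$ (a, b)) * cnj (B $$ (j, b)))"
    using A X B ij by (simp add: scalar_prod_def row_def col_def atLeast0LessThan)
  also have "\<dots> = (\<Sum>b<n. \<Sum>a<n. X $$ (a, b) * (A $$ (i, a) * cnj (B $$ (j, b))))"
    by (intro sum.cong refl) (simp only: sum_distrib_right, simp add: ac_simps)
  also have "\<dots> = (\<Sum>a<n. \<Sum>b<n. X $$ (a, b) * (A $$ (i, a) * cnj (B $$ (j, b))))"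
    by (rule sum.swap)
  finally show ?thesis .
qed

locale decoherent_walk = projection_resolution +
  fixes U :: "real \<Rightarrow> complex mat" and k :: real
  assumes unitary: "unitary_op n (U k)"
begin

abbreviation "V \<equiv> U k"

lemma V_carrier: "V \<in> carrier_mat n n"
  using unitary unfolding unitary_op_def by auto

lemma adj_V_mult_V: "adj V * V = 1\<^sub>m n"
  using unitary unfolding unitary_op_def by auto

lemma conj_carrier: "X \<in> carrier_mat n n \<Longrightarrow> V * X * adj V \<in> carrier_mat n n"
  using V_carrier by (meson adj_carrier mult_carrier_mat)

lemma projected_conj:
  assumes X: "X \<in> carrier_mat n n" and l: "l < m"
  shows "P l * V * X * adj (P l * V) = P l * (V * X * adj V) * P l"
proof -
  have Pl: "P l \<in> carrier_mat n n" using P_carrier[OF l] .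
  have aV: "adj V \<in> carrier_mat n n" using V_carrier by simp
  have PVX: "P l * V * X \<in> carrier_mat n n" using Pl V_carrier X by simp
  have "adj (P l * V) = adj V * P l" unfolding adj_mult[OF Pl V_carrier] P_adj[OF l] ..
  moreover have "P l * V * X * adj V = P l * (V * X * adj V)"
    using assoc_mult_mat[OF Pl V_carrier X] assoc_mult_mat[OF Pl _ aV, of "V * X"] V_carrier X by simp
  ultimately show ?thesis using assoc_mult_mat[OF PVX aV Pl] by simp
qed

lemma Lmap_eq_pinching:
  assumes "X \<in> carrier_mat n n"
  shows "Lmap n m P U k k q X = complex_of_real (1 - q) \<cdot>\<^sub>m (V * X * adj V) +
    complex_of_real q \<cdot>\<^sub>m pinching n m P (V * X * adj V)"
  unfolding Lmap_def pinching_def using projected_conj[OF assms] by (simp cong: msum_cong)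

lemma Lmap_carrier: "X \<in> carrier_mat n n \<Longrightarrow> Lmap n m P U k k q X \<in> carrier_mat n n"
  using Lmap_eq_pinching conj_carrier pinching_carrier by simp

lemma Lmap_index:
  assumes X: "X \<in> carrier_mat n n" and ij: "i < n" "j < n"
  shows "Lmap n m P U k k q X $$ (i, j) = (\<Sum>a<n. \<Sum>b<n. X $$ (a, b) *
     (complex_of_real (1 - q) * (V $$ (i, a) * cnj (V $$ (j, b))) +
      complex_of_real q * (\<Sum>l<m. (P l * V) $$ (i, a) * cnj ((P l * V) $$ (j, b)))))"
proof -
  have PV: "\<And>l. l < m \<Longrightarrow> P l * V \<in> carrier_mat n n"
    using P_carrier V_carrier by (meson mult_carrier_mat)
  have terms: "\<And>l. l < m \<Longrightarrow> P l * V * X * adj (P l * V) \<in> carrier_mat n n"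
    using PV X by (meson adj_carrier mult_carrier_mat)
  have sum: "msum n (\<lambda>l. P l * V * X * adj (P l * V)) m \<in> carrier_mat n n"
    by (rule msum_carrier) (rule terms)
  have "msum n (\<lambda>l. P l * V * X * adj (P l * V)) m $$ (i, j) =
      (\<Sum>l<m. \<Sum>a<n. \<Sum>b<n. X $$ (a, b) * ((P l * V) $$ (i, a) * cnj ((P l * V) $$ (j, b))))"
    using msum_index[OF terms ij] mult_mult_adj_index[OF PV X PV ij] by simp
  also have "\<dots> = (\<Sum>a<n. \<Sum>b<n. \<Sum>l<m. X $$ (a, b) * ((P l * V) $$ (i, a) * cnj ((P l * V) $$ (j, b))))"
    by (subst sum.swap) (intro sum.cong refl sum.swap)
  finally have msum_entry: "msum n (\<lambda>l. P l * V * X * adj (P l * V)) m $$ (i, j) =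
      (\<Sum>a<n. \<Sum>b<n. \<Sum>l<m. X $$ (a, b) * ((P l * V) $$ (i, a) * cnj ((P l * V) $$ (j, b))))" .
  have "Lmap n m P U k k q X $$ (i, j) = complex_of_real (1 - q) * (V * X * adj V) $$ (i, j)
      + complex_of_real q * msum n (\<lambda>l. P l * V * X * adj (P l * V)) m $$ (i, j)"
    unfolding Lmap_def using carrier_matD[OF conj_carrier[OF X]] carrier_matD[OF sum] ij by simp
  then show ?thesis
    unfolding msum_entry mult_mult_adj_index[OF V_carrier X V_carrier ij]
    by (simp add: sum.distrib sum_distrib_left distrib_left ac_simps)
qed

lemma op_matrix_Lmap_mult_vec:
  "v \<in> carrier_vec (n * n) \<Longrightarrow>
   op_matrix n (Lmap n m P U k k q) *\<^sub>v v = vec_of_mat n (Lmap n m P U k k q (mat_of_vec n v))"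
  by (rule op_matrix_mult_vec[OF Lmap_index])

lemma Lmap_decomposition:
  assumes X: "X \<in> carrier_mat n n"
  defines "Y \<equiv> V * X * adj V"
  shows "Lmap n m P U k k q X = pinching n m P Y + complex_of_real (1 - q) \<cdot>\<^sub>m (Y - pinching n m P Y)"
    and "hs_norm_sq n (Lmap n m P U k k q X) =
      hs_norm_sq n (pinching n m P Y) + (1 - q)\<^sup>2 * hs_norm_sq n (Y - pinching n m P Y)"
    and "hs_norm_sq n X = hs_norm_sq n (pinching n m P Y) + hs_norm_sq n (Y - pinching n m P Y)"
proof -
  have Y: "Y \<in> carrier_mat n n" unfolding Y_def using conj_carrier[OF X] .
  have W: "pinching n m P Y \<in> carrier_mat n n" using pinching_carrier[OF Y] .
  have Z: "Y - pinching n m P Y \<in> carrier_mat n n" by (rule minus_carrier_mat[OF W])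
  have orth: "hs_inner n (pinching n m P Y) (Y - pinching n m P Y) = 0"
    using pinching_orthogonal[OF Y] .
  show decomp: "Lmap n m P U k k q X = pinching n m P Y + complex_of_real (1 - q) \<cdot>\<^sub>m (Y - pinching n m P Y)"
    unfolding Lmap_eq_pinching[OF X] Y_def[symmetric]
    by (rule eq_matI) (use Y W in \<open>auto simp: algebra_simps\<close>)
  show "hs_norm_sq n (Lmap n m P U k k q X) =
      hs_norm_sq n (pinching n m P Y) + (1 - q)\<^sup>2 * hs_norm_sq n (Y - pinching n m P Y)"
  proof -
    have "(cmod (complex_of_real (1 - q)))\<^sup>2 = (1 - q)\<^sup>2"
      by (simp only: norm_of_real power2_abs)
    then show ?thesis unfolding decomp hs_norm_sq_add_smult_orthogonal[OF W Z orth] by simp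
  qed
  have "pinching n m P Y + 1 \<cdot>\<^sub>m (Y - pinching n m P Y) = Y"
    by (rule eq_matI) (use Y W in auto)
  then have "hs_norm_sq n Y = hs_norm_sq n (pinching n m P Y) + hs_norm_sq n (Y - pinching n m P Y)"
    using hs_norm_sq_add_smult_orthogonal[OF W Z orth, of 1] by simp
  then show "hs_norm_sq n X = hs_norm_sq n (pinching n m P Y) + hs_norm_sq n (Y - pinching n m P Y)"
    using hs_norm_sq_unitary_conj[OF V_carrier adj_V_mult_V X] unfolding Y_def by simp
qed

lemma hs_norm_sq_Lmap_le:
  assumes X: "X \<in> carrier_mat n n" and q: "\<bar>1 - q\<bar> \<le> 1"
  shows "hs_norm_sq n (Lmap n m P U k k q X) \<le> hs_norm_sq n X"
proof -
  have "(1 - q)\<^sup>2 \<le> 1" using q by (simp only: abs_square_le_1)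
  then show ?thesis
    unfolding Lmap_decomposition(2,3)[OF X]
    using mult_left_le_one_le[OF hs_norm_sq_nonneg zero_le_power2 \<open>(1 - q)\<^sup>2 \<le> 1\<close>] by simp
qed

lemma Lmap_eq_Lmap_1_if_norm_eq:
  assumes X: "X \<in> carrier_mat n n" and q: "\<bar>1 - q\<bar> < 1"
    and norm_eq: "hs_norm_sq n (Lmap n m P U k k q X) = hs_norm_sq n X"
  shows "Lmap n m P U k k q X = Lmap n m P U k k 1 X"
proof -
  define Y where "Y = V * X * adj V"
  have Z: "Y - pinching n m P Y \<in> carrier_mat n n"
    using minus_carrier_mat[OF pinching_carrier[OF conj_carrier[OF X]]] unfolding Y_def .
  have "(1 - q)\<^sup>2 < 1" using q by (simp only: abs_square_less_1)
  moreover have "(1 - q)\<^sup>2 * hs_norm_sq n (Y - pinching n m P Y) = hs_norm_sq n (Y - pinching n m P Y)"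
    using norm_eq unfolding Lmap_decomposition(2,3)[OF X] Y_def by simp
  ultimately have "hs_norm_sq n (Y - pinching n m P Y) = 0" by simp
  then have "Y - pinching n m P Y = 0\<^sub>m n n" using hs_norm_sq_eq_0_iff[OF Z] by simp
  then show ?thesis
    unfolding Lmap_decomposition(1)[OF X, of q] Lmap_decomposition(1)[OF X, of 1] Y_def[symmetric]
    using pinching_carrier[OF conj_carrier[OF X]] unfolding Y_def by simp
qed

lemma Lmap_fixed_if_Lmap_1_fixed:
  assumes X: "X \<in> carrier_mat n n" and fixed: "Lmap n m P U k k 1 X = X"
  shows "Lmap n m P U k k q X = X"
proof -
  define Y where "Y = V * X * adj V"
  have W: "pinching n m P Y \<in> carrier_mat n n"
    using pinching_carrier[OF conj_carrier[OF X]] unfolding Y_def .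
  have Z: "Y - pinching n m P Y \<in> carrier_mat n n" using minus_carrier_mat[OF W] .
  have "Lmap n m P U k k 1 X = pinching n m P Y"
    unfolding Lmap_decomposition(1)[OF X] Y_def[symmetric] by (rule eq_matI) (use W Z in auto)
  then have "X = pinching n m P Y" using fixed by simp
  then have "hs_norm_sq n (Y - pinching n m P Y) = 0"
    using Lmap_decomposition(3)[OF X] unfolding Y_def by simp
  then have "Y - pinching n m P Y = 0\<^sub>m n n" using hs_norm_sq_eq_0_iff[OF Z] by simp
  then show ?thesis
    unfolding Lmap_decomposition(1)[OF X, of q] Y_def[symmetric] using W \<open>X = pinching n m P Y\<close> by simp
qed

lemma contraction_op_matrix_Lmap:
  assumes "\<bar>1 - q\<bar> \<le> 1"
  shows "contraction (n * n) (op_matrix n (Lmap n m P U k k q))"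
  unfolding contraction_def
proof (intro conjI ballI)
  fix v :: "complex vec" assume v: "v \<in> carrier_vec (n * n)"
  have "hs_norm_sq n (Lmap n m P U k k q (mat_of_vec n v)) \<le> hs_norm_sq n (mat_of_vec n v)"
    by (rule hs_norm_sq_Lmap_le[OF mat_of_vec_carrier assms])
  then show "vec_norm_sq (n * n) (op_matrix n (Lmap n m P U k k q) *\<^sub>v v) \<le> vec_norm_sq (n * n) v"
    unfolding op_matrix_Lmap_mult_vec[OF v] vec_norm_sq_vec_of_mat vec_norm_sq_eq_hs_norm_sq[OF v] .
qed (simp add: op_matrix_def)

lemma op_matrix_Lmap_eq_if_norm_eq:
  assumes "\<bar>1 - q\<bar> < 1" and v: "v \<in> carrier_vec (n * n)"
    and "vec_norm_sq (n * n) (op_matrix n (Lmap n m P U k k q) *\<^sub>v v) = vec_norm_sq (n * n) v"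
  shows "op_matrix n (Lmap n m P U k k q) *\<^sub>v v = op_matrix n (Lmap n m P U k k 1) *\<^sub>v v"
proof -
  have "hs_norm_sq n (Lmap n m P U k k q (mat_of_vec n v)) = hs_norm_sq n (mat_of_vec n v)"
    using assms(3)
    unfolding op_matrix_Lmap_mult_vec[OF v] vec_norm_sq_vec_of_mat vec_norm_sq_eq_hs_norm_sq[OF v] .
  then show ?thesis
    unfolding op_matrix_Lmap_mult_vec[OF v]
    using Lmap_eq_Lmap_1_if_norm_eq[OF mat_of_vec_carrier assms(1)] by simp
qed

lemma op_matrix_Lmap_fixed_if_Lmap_1_fixed:
  assumes v: "v \<in> carrier_vec (n * n)" and "op_matrix n (Lmap n m P U k k 1) *\<^sub>v v = v"
  shows "op_matrix n (Lmap n m P U k k q) *\<^sub>v v = v"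
proof -
  have "Lmap n m P U k k 1 (mat_of_vec n v) = mat_of_vec n v"
    using arg_cong[OF assms(2), of "mat_of_vec n"]
    unfolding op_matrix_Lmap_mult_vec[OF v] mat_of_vec_vec_of_mat[OF Lmap_carrier[OF mat_of_vec_carrier]] .
  then show ?thesis
    unfolding op_matrix_Lmap_mult_vec[OF v]
    using Lmap_fixed_if_Lmap_1_fixed[OF mat_of_vec_carrier] vec_of_mat_mat_of_vec[OF v] by simp
qed

end

theorem mainTheorem6:
  fixes n m :: nat and P :: "nat \<Rightarrow> complex mat" and U :: "real \<Rightarrow> complex mat"
    and k p :: real
  assumes "proj_resolution n m P"
    and "\<forall>k. unitary_op n (U k)"
    and "eigenvalue_condition (op_matrix n (Lmap n m P U k k 1))"
    and "0 < p" and "p \<le> 1"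
  shows "eigenvalue_condition (op_matrix n (Lmap n m P U k k p))"
proof -
  interpret decoherent_walk n m P U k
    using assms(1,2) by unfold_locales auto
  have "\<bar>1 - p\<bar> < 1" using assms(4,5) by simp
  show ?thesis
  proof (rule eigenvalue_condition_of_contraction[OF contraction_op_matrix_Lmap _ assms(3)])
    show "op_matrix n (Lmap n m P U k k 1) \<in> carrier_mat (n * n) (n * n)"
      by (simp add: op_matrix_def)
  next
    fix v :: "complex vec" assume "v \<in> carrier_vec (n * n)"
    then show "op_matrix n (Lmap n m P U k k p) *\<^sub>v v = op_matrix n (Lmap n m P U k k 1) *\<^sub>v v"
      if "vec_norm_sq (n * n) (op_matrix n (Lmap n m P U k k p) *\<^sub>v v) = vec_norm_sq (n * n) v"
      using op_matrix_Lmap_eq_if_norm_eq[OF \<open>\<bar>1 - p\<bar> < 1\<close> _ that] by blast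
    show "op_matrix n (Lmap n m P U k k p) *\<^sub>v v = v"
      if "op_matrix n (Lmap n m P U k k 1) *\<^sub>v v = v"
      using op_matrix_Lmap_fixed_if_Lmap_1_fixed[OF \<open>v \<in> carrier_vec (n * n)\<close> that] .
  qed (use \<open>\<bar>1 - p\<bar> < 1\<close> in simp)
qed

end
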